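(* Let $n$ be an odd integer with $n>1$, and let $\mathcal{A}=(Q,A,\delta,q_0,F)$ be a circular semi-flower automaton with $|Q|=n$. Let $b\in A$. If the cycle formed by the $b$-edges of $\mathcal{A}$ has length $2$, then $\mathcal{A}$ is synchronizing.
   Context: An automaton over a finite alphabet $A$ is a quintuple $\mathcal{A}=(Q,A,\delta,q_0,F)$ with $Q$ a non-empty finite set of states, initial state $q_0\in Q$, set of final states $F\subseteq Q$, and total transition function $\delta:Q\times A\to Q$, extended to words in the usual way; each letter thus induces a transformation of $Q$. Its digraph has vertex set $Q$ and, for each $p\in Q$, $a\in A$, an edge labeled $a$ (an $a$-edge) from $p$ to $\delta(p,a)$. A path is an alternating sequence of distinct vertices and edges, each edge going from the preceding vertex to the next; a cycle is a path with at least one edge whose initial and terminal vertices coincide. A state $q$ is accessible if there is a path from $q_0$ to $q$, and co-accessible if there is a path from $q$ to a final state. $\mathcal{A}$ is a semi-flower automaton if $F=\{q_0\}$, every state is accessible and co-accessible, and every cycle passes through $q_0$. $\mathcal{A}$ is circular if some letter induces a circular permutation (a single cycle of length $|Q|$) on $Q$. In a semi-flower automaton, the sub-digraph formed by the $b$-edges (for a fixed letter $b$) contains exactly one cycle, called the $b$-cycle. $\mathcal{A}$ is synchronizing if there is a word $w\in A^*$ such that $\{\delta(q,w): q\in Q\}$ is a singleton. *)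

theory Defs
  imports Main
begin

definition automaton :: "'q set \<Rightarrow> 'a set \<Rightarrow> ('q \<Rightarrow> 'a \<Rightarrow> 'q) \<Rightarrow> 'q \<Rightarrow> 'q set \<Rightarrow> bool" where
  "automaton Q A \<delta> q0 F \<longleftrightarrow> finite Q \<and> Q \<noteq> {} \<and> finite A \<and> q0 \<in> Q \<and> F \<subseteq> Q \<and>
     (\<forall>p\<in>Q. \<forall>a\<in>A. \<delta> p a \<in> Q)"

definition delta_star :: "('q \<Rightarrow> 'a \<Rightarrow> 'q) \<Rightarrow> 'q \<Rightarrow> 'a list \<Rightarrow> 'q" where
  "delta_star \<delta> q w = foldl \<delta> q w"

text \<open>Edge relation of the digraph restricted to edges labelled by letters in a set L.
  Using L = A gives the digraph of the automaton; L = {b} gives the sub-digraph of b-edges.\<close>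
definition edge :: "'q set \<Rightarrow> 'a set \<Rightarrow> ('q \<Rightarrow> 'a \<Rightarrow> 'q) \<Rightarrow> 'q \<Rightarrow> 'q \<Rightarrow> bool" where
  "edge Q L \<delta> p q \<longleftrightarrow> p \<in> Q \<and> (\<exists>a\<in>L. \<delta> p a = q)"

definition is_walk :: "'q set \<Rightarrow> 'a set \<Rightarrow> ('q \<Rightarrow> 'a \<Rightarrow> 'q) \<Rightarrow> 'q list \<Rightarrow> bool" where
  "is_walk Q L \<delta> vs \<longleftrightarrow> vs \<noteq> [] \<and> set vs \<subseteq> Q \<and>
     (\<forall>i. Suc i < length vs \<longrightarrow> edge Q L \<delta> (vs ! i) (vs ! Suc i))"

definition is_path :: "'q set \<Rightarrow> 'a set \<Rightarrow> ('q \<Rightarrow> 'a \<Rightarrow> 'q) \<Rightarrow> 'q list \<Rightarrow> bool" where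
  "is_path Q L \<delta> vs \<longleftrightarrow> is_walk Q L \<delta> vs \<and> distinct vs"

text \<open>A cycle: at least one edge, first vertex = last vertex, otherwise vertices distinct.
  Its length is the number of edges, i.e. length vs - 1.\<close>
definition is_cycle :: "'q set \<Rightarrow> 'a set \<Rightarrow> ('q \<Rightarrow> 'a \<Rightarrow> 'q) \<Rightarrow> 'q list \<Rightarrow> bool" where
  "is_cycle Q L \<delta> vs \<longleftrightarrow> is_walk Q L \<delta> vs \<and> length vs \<ge> 2 \<and> hd vs = last vs \<and>
     distinct (butlast vs)"

definition accessible :: "'q set \<Rightarrow> 'a set \<Rightarrow> ('q \<Rightarrow> 'a \<Rightarrow> 'q) \<Rightarrow> 'q \<Rightarrow> 'q \<Rightarrow> bool" where
  "accessible Q A \<delta> q0 q \<longleftrightarrow> (\<exists>vs. is_path Q A \<delta> vs \<and> hd vs = q0 \<and> last vs = q)"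

definition coaccessible :: "'q set \<Rightarrow> 'a set \<Rightarrow> ('q \<Rightarrow> 'a \<Rightarrow> 'q) \<Rightarrow> 'q set \<Rightarrow> 'q \<Rightarrow> bool" where
  "coaccessible Q A \<delta> F q \<longleftrightarrow> (\<exists>vs. is_path Q A \<delta> vs \<and> hd vs = q \<and> last vs \<in> F)"

definition semi_flower :: "'q set \<Rightarrow> 'a set \<Rightarrow> ('q \<Rightarrow> 'a \<Rightarrow> 'q) \<Rightarrow> 'q \<Rightarrow> 'q set \<Rightarrow> bool" where
  "semi_flower Q A \<delta> q0 F \<longleftrightarrow> automaton Q A \<delta> q0 F \<and> F = {q0} \<and>
     (\<forall>q\<in>Q. accessible Q A \<delta> q0 q \<and> coaccessible Q A \<delta> F q) \<and>
     (\<forall>vs. is_cycle Q A \<delta> vs \<longrightarrow> q0 \<in> set vs)"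

definition circular_perm :: "'q set \<Rightarrow> ('q \<Rightarrow> 'q) \<Rightarrow> bool" where
  "circular_perm Q f \<longleftrightarrow> bij_betw f Q Q \<and> (\<forall>p\<in>Q. {(f ^^ k) p | k. True} = Q)"

definition circular :: "'q set \<Rightarrow> 'a set \<Rightarrow> ('q \<Rightarrow> 'a \<Rightarrow> 'q) \<Rightarrow> bool" where
  "circular Q A \<delta> \<longleftrightarrow> (\<exists>a\<in>A. circular_perm Q (\<lambda>p. \<delta> p a))"

definition synchronizing :: "'q set \<Rightarrow> 'a set \<Rightarrow> ('q \<Rightarrow> 'a \<Rightarrow> 'q) \<Rightarrow> bool" where
  "synchronizing Q A \<delta> \<longleftrightarrow> (\<exists>w\<in>lists A. \<exists>s. (\<lambda>q. delta_star \<delta> q w) ` Q = {s})"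

end

theory Submission
  imports Defs
begin

text \<open>Let \<open>g\<close> be the transformation induced by \<open>b\<close>. Iterating \<open>g\<close> from any state eventually
  runs into a \<open>b\<close>-cycle, and in a semi-flower automaton every cycle contains \<open>q\<^sub>0\<close>; so the
  \<open>b\<close>-cycle is \<open>q\<^sub>0 \<rightarrow> p \<rightarrow> q\<^sub>0\<close> and a power \<open>b\<^sup>N\<close> maps all of \<open>Q\<close> into \<open>{q\<^sub>0, p}\<close>. It then suffices
  to find a word merging \<open>q\<^sub>0\<close> and \<open>p\<close>. Write \<open>p = f\<^sup>m q\<^sub>0\<close> for the permutation \<open>f\<close> induced by the
  circular letter \<open>a\<close>, and colour each state \<open>y\<close> by \<open>g\<^sup>N y \<in> {q\<^sub>0, p}\<close>. If \<open>f\<^sup>m\<close> changed the colour of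
  every state it would match the two colour classes bijectively, forcing \<open>|Q|\<close> to be even.
  Hence some \<open>y = f\<^sup>x q\<^sub>0\<close> has the same colour as \<open>f\<^sup>m y = f\<^sup>x p\<close>, and \<open>a\<^sup>x b\<^sup>N\<close> merges \<open>q\<^sub>0\<close> and \<open>p\<close>.\<close>

lemma delta_star_append:
  "delta_star \<delta> q (xs @ ys) = delta_star \<delta> (delta_star \<delta> q xs) ys"
  by (simp add: delta_star_def)

lemma delta_star_replicate:
  "delta_star \<delta> q (replicate k c) = ((\<lambda>p. \<delta> p c) ^^ k) q"
proof (induction k arbitrary: q)
  case (Suc k)
  then show ?case using funpow_swap1[of "\<lambda>p. \<delta> p c" k q] by (simp add: delta_star_def)
qed (simp add: delta_star_def)

lemma funpow_closed: "(\<And>x. x \<in> S \<Longrightarrow> g x \<in> S) \<Longrightarrow> q \<in> S \<Longrightarrow> (g ^^ k) q \<in> S"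
  by (induction k) auto

lemma is_cycle_mono_letters: "is_cycle Q L \<delta> vs \<Longrightarrow> L \<subseteq> L' \<Longrightarrow> is_cycle Q L' \<delta> vs"
  unfolding is_cycle_def is_walk_def edge_def by blast

lemma is_cycle_orbit_segment:
  fixes \<delta> :: "'q \<Rightarrow> 'a \<Rightarrow> 'q" and q :: 'q and b :: 'a
  defines "h \<equiv> \<lambda>k. ((\<lambda>p. \<delta> p b) ^^ k) q"
  assumes closed: "\<forall>x\<in>Q. \<delta> x b \<in> Q" and "q \<in> Q" and "i < j" and "h i = h j"
    and "inj_on h {i..<j}"
  shows "is_cycle Q {b} \<delta> (map h [i..<Suc j])"
proof -
  have hQ: "h k \<in> Q" for k
    unfolding h_def using funpow_closed[of Q "\<lambda>p. \<delta> p b"] closed \<open>q \<in> Q\<close> by blast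
  let ?vs = "map h [i..<Suc j]"
  have nth: "?vs ! k = h (i + k)" if "k < length ?vs" for k
    using that \<open>i < j\<close> by (simp del: upt_Suc add: nth_upt)
  show ?thesis
    unfolding is_cycle_def is_walk_def
  proof (intro conjI allI impI)
    show "edge Q {b} \<delta> (?vs ! k) (?vs ! Suc k)" if "Suc k < length ?vs" for k
      using that nth[of k] nth[of "Suc k"] hQ by (simp add: edge_def h_def)
    have "butlast ?vs = map h [i..<j]"
      by (simp add: map_butlast[symmetric])
    then show "distinct (butlast ?vs)"
      using \<open>inj_on h {i..<j}\<close> by (simp add: distinct_map)
  qed (use \<open>i < j\<close> \<open>h i = h j\<close> hQ in \<open>auto simp: hd_map last_map\<close>)
qed

text \<open>The cycle is cut out of the orbit at the first repetition, which pigeonhole guarantees.\<close>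

lemma orbit_contains_cycle:
  assumes "finite Q" and closed: "\<forall>x\<in>Q. \<delta> x b \<in> Q" and "q \<in> Q"
  shows "\<exists>vs. is_cycle Q {b} \<delta> vs \<and> set vs \<subseteq> range (\<lambda>k. ((\<lambda>p. \<delta> p b) ^^ k) q)"
proof -
  define h where "h k = ((\<lambda>p. \<delta> p b) ^^ k) q" for k
  have hQ: "h k \<in> Q" for k
    unfolding h_def using funpow_closed[of Q "\<lambda>p. \<delta> p b"] closed \<open>q \<in> Q\<close> by blast
  have "\<not> inj_on h {..card Q}"
  proof
    assume "inj_on h {..card Q}"
    then have "card {..card Q} \<le> card Q"
      using card_inj_on_le hQ \<open>finite Q\<close> by blast
    then show False by simp
  qed
  then obtain k l where "k \<noteq> l" "h k = h l"
    unfolding inj_on_def by blast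
  then have repeat: "\<exists>j. \<exists>i<j. h i = h j"
    by (metis nat_neq_iff)
  define j where "j = (LEAST j. \<exists>i<j. h i = h j)"
  obtain i where "i < j" "h i = h j"
    using LeastI_ex[OF repeat] unfolding j_def by blast
  have no_repeat: "\<not> (\<exists>k<l. h k = h l)" if "l < j" for l
    using not_less_Least[of l] that unfolding j_def by blast
  have "inj_on h {i..<j}"
  proof (rule inj_onI)
    fix k l assume "k \<in> {i..<j}" "l \<in> {i..<j}" "h k = h l"
    then show "k = l"
      using no_repeat[of k] no_repeat[of l] by (cases k l rule: linorder_cases) auto
  qed
  then have "is_cycle Q {b} \<delta> (map h [i..<Suc j])"
    using is_cycle_orbit_segment[of Q \<delta> b q i j] closed \<open>q \<in> Q\<close> \<open>i < j\<close> \<open>h i = h j\<close>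
    unfolding h_def by blast
  then show ?thesis by (intro exI[of _ "map h [i..<Suc j]"]) (auto simp: h_def)
qed

lemma semi_flower_letter_cycle_through_initial:
  assumes "semi_flower Q A \<delta> q0 F" and "b \<in> A" and "is_cycle Q {b} \<delta> vs"
  shows "q0 \<in> set vs"
  using assms is_cycle_mono_letters[of Q "{b}" \<delta> vs A] unfolding semi_flower_def by auto

lemma semi_flower_orbit_reaches_initial:
  assumes "semi_flower Q A \<delta> q0 F" and "b \<in> A" and "q \<in> Q"
  shows "\<exists>k. ((\<lambda>p. \<delta> p b) ^^ k) q = q0"
proof -
  have "finite Q" and closed: "\<forall>x\<in>Q. \<delta> x b \<in> Q"
    using assms(1,2) unfolding semi_flower_def automaton_def by auto
  obtain vs where "is_cycle Q {b} \<delta> vs" and orbit: "set vs \<subseteq> range (\<lambda>k. ((\<lambda>p. \<delta> p b) ^^ k) q)"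
    using orbit_contains_cycle[of Q \<delta> b q] \<open>finite Q\<close> closed \<open>q \<in> Q\<close> by blast
  then have "q0 \<in> set vs"
    using semi_flower_letter_cycle_through_initial[OF assms(1,2)] by blast
  then show ?thesis using orbit by auto
qed

lemma semi_flower_two_cycle:
  assumes "semi_flower Q A \<delta> q0 F" and "b \<in> A"
    and "is_cycle Q {b} \<delta> vs" and "length vs - 1 = 2"
  shows "\<exists>p\<in>Q. \<delta> q0 b = p \<and> \<delta> p b = q0"
proof -
  obtain u v z where vs: "vs = [u, v, z]"
    using \<open>length vs - 1 = 2\<close> by (cases vs rule: rev_cases; auto simp: numeral_eq_Suc length_Suc_conv)
  have walk: "\<forall>i. Suc i < length vs \<longrightarrow> edge Q {b} \<delta> (vs ! i) (vs ! Suc i)" and "z = u"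
    using \<open>is_cycle Q {b} \<delta> vs\<close> unfolding vs is_cycle_def is_walk_def by auto
  then have "u \<in> Q" "v \<in> Q" "\<delta> u b = v" "\<delta> v b = u"
    using walk[rule_format, of 0] walk[rule_format, of 1] by (simp_all add: vs edge_def)
  moreover have "q0 \<in> set vs"
    using semi_flower_letter_cycle_through_initial[OF assms(1-3)] .
  ultimately show ?thesis using vs \<open>z = u\<close> by auto
qed

lemma funpow_uniformly_absorbed:
  assumes "finite Q" and reach: "\<forall>q\<in>Q. \<exists>k. (g ^^ k) q \<in> C" and invariant: "\<forall>x\<in>C. g x \<in> C"
  shows "\<exists>N. \<forall>q\<in>Q. (g ^^ N) q \<in> C"
proof -
  obtain K where K: "\<forall>q\<in>Q. (g ^^ K q) q \<in> C"
    using bchoice[OF reach] by blast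
  have "(g ^^ sum K Q) q \<in> C" if "q \<in> Q" for q
  proof -
    have "sum K Q = (sum K Q - K q) + K q"
      using member_le_sum[of q Q K] \<open>finite Q\<close> that by simp
    then have "(g ^^ sum K Q) q = (g ^^ (sum K Q - K q)) ((g ^^ K q) q)"
      by (metis comp_apply funpow_add)
    then show ?thesis
      using funpow_closed[of C g] invariant K that by auto
  qed
  then show ?thesis by blast
qed

lemma semi_flower_collapse_onto_two_cycle:
  assumes "semi_flower Q A \<delta> q0 F" and "b \<in> A" and "\<delta> q0 b = p" and "\<delta> p b = q0"
  shows "\<exists>N. \<forall>q\<in>Q. delta_star \<delta> q (replicate N b) \<in> {q0, p}"
proof -
  have "finite Q"
    using assms(1) unfolding semi_flower_def automaton_def by auto
  have "\<exists>N. \<forall>q\<in>Q. ((\<lambda>q. \<delta> q b) ^^ N) q \<in> {q0, p}"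
  proof (rule funpow_uniformly_absorbed[OF \<open>finite Q\<close>])
    show "\<forall>q\<in>Q. \<exists>k. ((\<lambda>q. \<delta> q b) ^^ k) q \<in> {q0, p}"
      using semi_flower_orbit_reaches_initial[OF assms(1,2)] by blast
    show "\<forall>x\<in>{q0, p}. \<delta> x b \<in> {q0, p}"
      using assms(3,4) by auto
  qed
  then show ?thesis
    unfolding delta_star_replicate .
qed

lemma odd_card_inj_preserves_some_colour:
  assumes "finite Q" and "odd (card Q)" and "inj_on h Q" and "h ` Q \<subseteq> Q"
    and two_colours: "c ` Q \<subseteq> {s, t}"
  shows "\<exists>y\<in>Q. c y = c (h y)"
proof (rule ccontr)
  assume swap: "\<not> (\<exists>y\<in>Q. c y = c (h y))"
  define S where "S = {y\<in>Q. c y = s}"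
  define T where "T = Q - S"
  have ST: "h ` S \<subseteq> T" and TS: "h ` T \<subseteq> S"
    using swap two_colours \<open>h ` Q \<subseteq> Q\<close> unfolding S_def T_def image_subset_iff by auto
  have "S \<subseteq> Q" "T \<subseteq> Q" "finite S" "finite T"
    using \<open>finite Q\<close> unfolding S_def T_def by auto
  have "card S \<le> card T"
    using card_inj_on_le[OF inj_on_subset[OF \<open>inj_on h Q\<close> \<open>S \<subseteq> Q\<close>] ST \<open>finite T\<close>] .
  moreover have "card T \<le> card S"
    using card_inj_on_le[OF inj_on_subset[OF \<open>inj_on h Q\<close> \<open>T \<subseteq> Q\<close>] TS \<open>finite S\<close>] .
  moreover have "card T = card Q - card S" "card S \<le> card Q"
    using \<open>finite Q\<close> \<open>finite S\<close> \<open>S \<subseteq> Q\<close> unfolding T_def by (auto simp: card_Diff_subset card_mono)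
  ultimately show False using \<open>odd (card Q)\<close> by presburger
qed

lemma synchronizing_if_image_pair_merged:
  assumes "u \<in> lists A" and "v \<in> lists A" and "Q \<noteq> {}"
    and image: "\<forall>q\<in>Q. delta_star \<delta> q u \<in> {s, t}"
    and merge: "delta_star \<delta> s v = delta_star \<delta> t v"
  shows "synchronizing Q A \<delta>"
proof -
  have "\<forall>q\<in>Q. delta_star \<delta> q (u @ v) = delta_star \<delta> s v"
    using image merge by (auto simp: delta_star_append)
  then have "(\<lambda>q. delta_star \<delta> q (u @ v)) ` Q = {delta_star \<delta> s v}"
    using \<open>Q \<noteq> {}\<close> by force
  moreover have "u @ v \<in> lists A"
    using assms(1,2) by simp
  ultimately show ?thesis
    unfolding synchronizing_def by blast
qed

lemma odd_circular_synchronizing_if_image_pair: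
  assumes "finite Q" and "odd (card Q)" and "a \<in> A" and "circular_perm Q (\<lambda>q. \<delta> q a)"
    and "u \<in> lists A" and "s \<in> Q" and "t \<in> Q" and image: "\<forall>q\<in>Q. delta_star \<delta> q u \<in> {s, t}"
  shows "synchronizing Q A \<delta>"
proof -
  define f where "f = (\<lambda>q. \<delta> q a)"
  define c where "c y = delta_star \<delta> y u" for y
  have "bij_betw f Q Q" and orbit: "{(f ^^ k) s | k. True} = Q"
    using assms(4) \<open>s \<in> Q\<close> unfolding circular_perm_def f_def by auto
  obtain m where t_power: "t = (f ^^ m) s"
    using orbit \<open>t \<in> Q\<close> by blast
  have "\<exists>y\<in>Q. c y = c ((f ^^ m) y)"
  proof (rule odd_card_inj_preserves_some_colour)
    show "inj_on (f ^^ m) Q" "(f ^^ m) ` Q \<subseteq> Q"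
      using bij_betw_funpow[OF \<open>bij_betw f Q Q\<close>] unfolding bij_betw_def by auto
    show "c ` Q \<subseteq> {s, t}"
      using image unfolding c_def by blast
  qed (use assms(1,2) in auto)
  then obtain x where merged: "c ((f ^^ x) s) = c ((f ^^ m) ((f ^^ x) s))"
    using orbit by blast
  have "(f ^^ m) ((f ^^ x) s) = (f ^^ x) t"
    unfolding t_power by (metis add.commute comp_apply funpow_add)
  show ?thesis
  proof (rule synchronizing_if_image_pair_merged[where v = "replicate x a @ u"])
    show "delta_star \<delta> s (replicate x a @ u) = delta_star \<delta> t (replicate x a @ u)"
      using merged \<open>(f ^^ m) ((f ^^ x) s) = (f ^^ x) t\<close>
      unfolding delta_star_append delta_star_replicate f_def c_def by simp
  qed (use assms(3,5,6) image in auto)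
qed

theorem mainTheorem3:
  fixes Q :: "'q set" and A :: "'a set" and \<delta> :: "'q \<Rightarrow> 'a \<Rightarrow> 'q"
    and q0 :: 'q and F :: "'q set" and n :: nat and b :: 'a
  assumes "odd n" and "n > 1"
    and "semi_flower Q A \<delta> q0 F"
    and "circular Q A \<delta>"
    and "card Q = n"
    and "b \<in> A"
    and "\<exists>vs. is_cycle Q {b} \<delta> vs \<and> length vs - 1 = 2"
  shows "synchronizing Q A \<delta>"
proof -
  have "finite Q" and "q0 \<in> Q"
    using assms(3) unfolding semi_flower_def automaton_def by auto
  obtain p where "p \<in> Q" and "\<delta> q0 b = p" and "\<delta> p b = q0"
    using semi_flower_two_cycle[OF assms(3,6)] assms(7) by blast
  then obtain N where image: "\<forall>q\<in>Q. delta_star \<delta> q (replicate N b) \<in> {q0, p}"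
    using semi_flower_collapse_onto_two_cycle[OF assms(3,6)] by blast
  obtain a where "a \<in> A" and circular: "circular_perm Q (\<lambda>q. \<delta> q a)"
    using assms(4) unfolding circular_def by blast
  have "odd (card Q)" and "replicate N b \<in> lists A"
    using assms(1,5,6) by auto
  then show ?thesis
    using odd_circular_synchronizing_if_image_pair[OF \<open>finite Q\<close> _ \<open>a \<in> A\<close> circular _
        \<open>q0 \<in> Q\<close> \<open>p \<in> Q\<close> image] by blast
qed

end
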